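(* Let $d$ be an odd positive integer. For $k=0,1$ consider the formal power series $\mathcal A_{1,k}(c_1,c_2,d)=\sum_{r\ge0}\alpha^{r,d}_{1,k}\in\mathbb Z[[c_1,c_2]]$ (so $\alpha^{r,d}_{1,k}$ is its homogeneous part of degree $r+k$, with $\deg c_1=1,\deg c_2=2$). Then $$\mathcal A_{1,0}(c_1,c_2,d)=\frac{d}{\big(1+\frac{d-1}{2}c_1\big)\big(1-\frac{d+1}{2}c_1\big)+d^2c_2},\qquad \mathcal A_{1,1}(c_1,c_2,d)=\frac{1+\frac{d-1}{2}c_1}{\big(1+\frac{d-1}{2}c_1\big)\big(1-\frac{d+1}{2}c_1\big)+d^2c_2}-1.$$
   Context: Ground field $k$ algebraically closed of characteristic $0$ or $>d$. $E$ is the standard representation of $\mathrm{GL}_2$ with Chern classes $c_1,c_2$; $W_n=\mathrm{Sym}^n(E^\vee)$ is the space of binary forms of degree $n$, $\mathrm{GL}_2$ acting by $f\mapsto f\circ A^{-1}$. $T$ is the diagonal torus, $A^*_T=\mathbb Z[l_1,l_2]$, $c_1=-(l_1+l_2)$, $c_2=l_1l_2$. On $\mathbb P(W_n^{\oplus m})$ the equivariant hyperplane class is normalized so that the coordinate hyperplane where the coefficient of $x^{n-j}y^j$ in one summand vanishes has class (hyperplane class)$+(n-j)l_1+jl_2$; $H$ is this class on $\mathbb P(W_d^{\oplus r+1})$, and $A^*_{\mathrm{GL}_2}(\mathbb P(W_d^{\oplus r+1}))=\mathbb Z[c_1,c_2,H]/(P_{r,d}(H))$, $P_{r,d}(H)=\prod_{j=0}^d(H+(d-j)l_1+jl_2)^{r+1}$.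 For $r\ge0$: $\widetilde Z_1=\mathbb P(W_1)\times\mathbb P(W_{d-1}^{\oplus r+1})$, $\pi_1([c],[g_1,\dots,g_{r+1}])=[cg_1,\dots,cg_{r+1}]$, $h_1$ the pullback of the hyperplane class of $\mathbb P(W_1)$, $\alpha^{r,d}_{1,k}(H)=\pi_{1*}(h_1^k)$ identified with its unique homogeneous representative of degree $r+k$ in $\mathbb Z[c_1,c_2,H]$, and $\alpha^{r,d}_{1,k}:=\alpha^{r,d}_{1,k}(\tfrac{d+1}{2}c_1)\in\mathbb Z[c_1,c_2]$. *)

theory Defs
  imports "HOL-Computational_Algebra.Computational_Algebra"
begin

(* Concrete algebraic model of T-equivariant intersection theory on the projective
   spaces P(W_n^{(+)m}), with the torus parameters l1, l2 specialised to arbitrary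
   real numbers.  *)

(* weight of the coordinate x^(n-j) y^j of W_n: hyperplane class H + (n-j) l1 + j l2 *)
definition wt :: "nat \<Rightarrow> real \<Rightarrow> real \<Rightarrow> nat \<Rightarrow> real" where
  "wt n l1 l2 j = real (n - j) * l1 + real j * l2"

(* relation  prod_{j=0}^n (H + (n-j) l1 + j l2)^m  of A_T(P(W_n^{(+)m})) *)
definition rel_poly :: "nat \<Rightarrow> nat \<Rightarrow> real \<Rightarrow> real \<Rightarrow> real poly" where
  "rel_poly n m l1 l2 = (\<Prod>j\<in>{0..n}. [:wt n l1 l2 j, 1:] ^ m)"

definition proj_dim :: "nat \<Rightarrow> nat \<Rightarrow> nat" where
  "proj_dim n m = m * (n + 1) - 1"

(* equivariant integral (pushforward to a point) of a class f(H) on P(W_n^{(+)m}):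
   the coefficient of H^dim in the reduced representative *)
definition eq_integral :: "nat \<Rightarrow> nat \<Rightarrow> real \<Rightarrow> real \<Rightarrow> real poly \<Rightarrow> real" where
  "eq_integral n m l1 l2 f = coeff (f mod rel_poly n m l1 l2) (proj_dim n m)"

(* integral over Z1~ = P(W_1) x P(W_{d-1}^{(+)r+1}) of  h1^k * (pi1^* H)^m,
   where pi1^* H = h1 + h2, expanded binomially; the integral of h1^a h2^b over the
   product is the product of the integrals over the factors *)
definition src_integral :: "nat \<Rightarrow> nat \<Rightarrow> nat \<Rightarrow> nat \<Rightarrow> real \<Rightarrow> real \<Rightarrow> real" where
  "src_integral r d k m l1 l2 =
     (\<Sum>i\<le>m. real (m choose i) * eq_integral 1 1 l1 l2 (monom 1 (k + i))
                 * eq_integral (d - 1) (r + 1) l1 l2 (monom 1 (m - i)))"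

(* alpha^{r,d}_{1,k}(H) = pi_{1*}(h1^k): the reduced representative (degree <= dim)
   determined by the projection formula  int (pi_* x) H^m = int x (pi^* H)^m *)
definition alphaH :: "nat \<Rightarrow> nat \<Rightarrow> nat \<Rightarrow> real \<Rightarrow> real \<Rightarrow> real poly" where
  "alphaH r d k l1 l2 =
     (THE a. degree a \<le> proj_dim d (r + 1) \<and>
        (\<forall>m \<le> proj_dim d (r + 1).
            eq_integral d (r + 1) l1 l2 (a * monom 1 m) = src_integral r d k m l1 l2))"

definition alpha :: "nat \<Rightarrow> nat \<Rightarrow> nat \<Rightarrow> real \<Rightarrow> real \<Rightarrow> real" where
  "alpha r d k l1 l2 = poly (alphaH r d k l1 l2) (real (d + 1) / 2 * (- (l1 + l2)))"

end

theory Submission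
  imports Defs
begin

(* The equivariant integral of a class f(H) over P(W_n^(m)) is the coefficient of H^dim in
   f mod P, P the relation polynomial, i.e. the sum of the residues of f/P.  This functional is
   invariant under translating H, and multiplying f and P by a common monic factor does not
   change it.  Since

     P_{r,d}(H) = P_{r,d-1}(H + l1) (H + d l2)^(r+1) = P_{r,d-1}(H + l2) (H + d l1)^(r+1),

   localising an integral over Z1~ = P(W_1) x P(W_{d-1}^(r+1)) at the fixed points h1 = -l1, -l2
   of P(W_1) turns it into an integral over P(W_d^(r+1)) against (H + d l2)^(r+1), resp.
   (H + d l1)^(r+1).  As the integration pairing is non-degenerate, pi_1*(h1^k) is the divided
   difference ((-l1)^k (H + d l2)^(r+1) - (-l2)^k (H + d l1)^(r+1)) / (l2 - l1), which for
   k = 0, 1 is expressed through the complete homogeneous polynomial h_r(U, V) in U = H + d l2,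
   V = H + d l1; for l1 = l2 the fixed point is double and an integration by parts replaces the
   division.  At H = (d+1)/2 c1 one has U + V = c1 and U V = d^2 c2 - (d^2 - 1)/4 c1^2, so the
   generating series 1/((1 - U t)(1 - V t)) of the h_r(U, V) has exactly the denominator of the
   theorem.  Oddness of d is used only through d >= 1. *)

section \<open>Sums of residues\<close>

definition rem_top_coeff :: "'a::field poly \<Rightarrow> 'a poly \<Rightarrow> 'a" where
  "rem_top_coeff P f = coeff (f mod P) (degree P - 1)"

lemma rem_top_coeff_add: "rem_top_coeff P (f + g) = rem_top_coeff P f + rem_top_coeff P g"
  by (simp add: rem_top_coeff_def poly_mod_add_left)

lemma rem_top_coeff_diff: "rem_top_coeff P (f - g) = rem_top_coeff P f - rem_top_coeff P g"
  by (simp add: rem_top_coeff_def poly_mod_diff_left)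

lemma rem_top_coeff_smult: "rem_top_coeff P (smult a f) = a * rem_top_coeff P f"
  by (simp add: rem_top_coeff_def mod_smult_left)

lemma rem_top_coeff_0 [simp]: "rem_top_coeff P 0 = 0"
  by (simp add: rem_top_coeff_def)

lemma rem_top_coeff_sum: "rem_top_coeff P (\<Sum>i\<in>A. f i) = (\<Sum>i\<in>A. rem_top_coeff P (f i))"
  by (induction A rule: infinite_finite_induct) (simp_all add: rem_top_coeff_add)

lemma coeff_mult_at_degree_shift:
  fixes g R :: "'a::comm_semiring_1 poly"
  assumes "degree g \<le> n"
  shows "coeff (g * R) (n + degree R) = coeff g n * lead_coeff R"
proof (cases "degree g = n")
  case True
  then show ?thesis using coeff_mult_degree_sum[of g R] by simp
next
  case False
  then have "degree (g * R) < n + degree R" "degree g < n"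
    using assms degree_mult_le[of g R] by linarith+
  then show ?thesis by (simp add: coeff_eq_0)
qed

lemma rem_top_coeff_mult_monic:
  fixes Q R f :: "'a::field poly"
  assumes "Q \<noteq> 0" and "lead_coeff R = 1"
  shows "rem_top_coeff (Q * R) (f * R) = rem_top_coeff Q f"
proof (cases "degree Q = 0")
  case True
  then have "f mod Q = 0" using degree_mod_less[OF assms(1), of f] by simp
  then show ?thesis by (simp add: rem_top_coeff_def mod_mult_mult2)
next
  case False
  have R: "R \<noteq> 0" using assms(2) by auto
  have "degree (f mod Q) \<le> degree Q - 1"
    using False degree_mod_less[OF assms(1), of f] by auto
  then have "coeff (f mod Q * R) (degree Q - 1 + degree R) = coeff (f mod Q) (degree Q - 1)"
    using assms(2) by (simp add: coeff_mult_at_degree_shift)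
  moreover have "degree (Q * R) - 1 = degree Q - 1 + degree R"
    using False assms(1) R by (simp add: degree_mult_eq)
  ultimately show ?thesis by (simp add: rem_top_coeff_def mod_mult_mult2)
qed

lemma pcompose_linear_mod:
  fixes f P :: "'a::field poly"
  assumes "P \<noteq> 0"
  shows "pcompose f [:c, 1:] mod pcompose P [:c, 1:] = pcompose (f mod P) [:c, 1:]"
proof -
  have "pcompose f [:c, 1:] = pcompose (f mod P) [:c, 1:] + pcompose (f div P) [:c, 1:] * pcompose P [:c, 1:]"
    by (metis div_mult_mod_eq add.commute pcompose_add pcompose_mult)
  moreover have "pcompose (f mod P) [:c, 1:] = 0 \<or>
      degree (pcompose (f mod P) [:c, 1:]) < degree (pcompose P [:c, 1:])"
    using degree_mod_less[OF assms, of f] by (auto simp: degree_pcompose)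
  ultimately show ?thesis by (auto simp: mod_poly_less)
qed

lemma coeff_pcompose_linear_top:
  fixes g :: "'a::idom poly"
  assumes "degree g \<le> n"
  shows "coeff (pcompose g [:c, 1:]) n = coeff g n"
proof (cases "degree g = n")
  case True
  then show ?thesis using lead_coeff_comp[of "[:c, 1:]" g] by (simp add: degree_pcompose)
next
  case False
  then show ?thesis using assms by (simp add: degree_pcompose coeff_eq_0)
qed

lemma rem_top_coeff_pcompose_linear:
  fixes P f :: "'a::field poly"
  assumes "P \<noteq> 0"
  shows "rem_top_coeff (pcompose P [:c, 1:]) (pcompose f [:c, 1:]) = rem_top_coeff P f"
proof (cases "degree P = 0")
  case True
  then have "f mod P = 0" using degree_mod_less[OF assms, of f] by simp
  then show ?thesis using assms by (simp add: rem_top_coeff_def pcompose_linear_mod)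
next
  case False
  then have "degree (f mod P) \<le> degree P - 1"
    using degree_mod_less[OF assms, of f] by auto
  then show ?thesis
    using assms by (simp add: rem_top_coeff_def pcompose_linear_mod degree_pcompose coeff_pcompose_linear_top)
qed

lemma rem_top_coeff_monom:
  assumes "N > 0"
  shows "rem_top_coeff (monom 1 N) f = coeff f (N - 1)"
proof -
  have "coeff (monom 1 N * (f div monom 1 N)) (N - 1) = 0"
    using assms by (simp add: coeff_monom_mult)
  then have "coeff f (N - 1) = coeff (f mod monom 1 N) (N - 1)"
    by (metis add_0 coeff_add div_mult_mod_eq mult.commute)
  then show ?thesis by (simp add: rem_top_coeff_def degree_monom_eq)
qed

lemma pcompose_linear_linear: "pcompose [:a, 1:] [:c, 1:] = [:a + c, 1::'a::comm_ring_1:]"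
  by (simp add: pcompose_pCons)

lemma pcompose_power: "pcompose (p ^ n) q = pcompose p q ^ n"
  by (induction n) (simp_all add: pcompose_1 pcompose_mult)

lemma monom_pcompose_linear: "pcompose (monom 1 n) [:c, 1:] = [:c, 1::'a::comm_ring_1:] ^ n"
  by (simp add: monom_altdef pcompose_power pcompose_pCons)

lemma rem_top_coeff_linear_power:
  fixes f :: "'a::field poly"
  assumes "N > 0"
  shows "rem_top_coeff ([:c, 1:] ^ N) f = coeff (pcompose f [:- c, 1:]) (N - 1)"
proof -
  have "f = pcompose (pcompose f [:- c, 1:]) [:c, 1:]"
    by (simp add: pcompose_assoc[symmetric] pcompose_linear_linear)
  then have "rem_top_coeff ([:c, 1:] ^ N) f
      = rem_top_coeff (pcompose (monom 1 N) [:c, 1:]) (pcompose (pcompose f [:- c, 1:]) [:c, 1:])"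
    by (simp add: monom_pcompose_linear)
  also have "\<dots> = coeff (pcompose f [:- c, 1:]) (N - 1)"
    using assms by (simp add: rem_top_coeff_pcompose_linear rem_top_coeff_monom)
  finally show ?thesis .
qed

lemma rem_top_coeff_shifted_monom:
  fixes P :: "'a::field poly"
  assumes "P \<noteq> 0"
  shows "rem_top_coeff P ([:- c, 1:] ^ m) = rem_top_coeff (pcompose P [:c, 1:]) (monom 1 m)"
  using rem_top_coeff_pcompose_linear[OF assms, of c "[:- c, 1:] ^ m"]
  by (simp add: pcompose_power pcompose_linear_linear monom_altdef)

lemma rem_top_coeff_linear_power_expand:
  fixes P :: "'a::field poly"
  shows "rem_top_coeff P ([:a, 1:] ^ m) = (\<Sum>i\<le>m. of_nat (m choose i) * a ^ i * rem_top_coeff P (monom 1 (m - i)))"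
proof -
  have "[:a, 1:] ^ m = ([:a:] + monom 1 1) ^ m" by (simp add: monom_altdef)
  also have "\<dots> = (\<Sum>i\<le>m. smult (of_nat (m choose i) * a ^ i) (monom 1 (m - i)))"
    by (subst binomial_ring) (simp add: of_nat_poly monom_power poly_const_pow smult_monom ac_simps)
  finally show ?thesis by (simp add: rem_top_coeff_sum rem_top_coeff_smult)
qed

lemma rem_top_coeff_eq_0_imp_eq_0:
  fixes a P :: "'a::field poly"
  assumes "degree a < degree P"
    and "\<And>m. m < degree P \<Longrightarrow> rem_top_coeff P (a * monom 1 m) = 0"
  shows "a = 0"
proof (rule ccontr)
  assume "a \<noteq> 0"
  define m where "m = degree P - 1 - degree a"
  have deg: "degree (a * monom 1 m) = degree P - 1"
    using \<open>a \<noteq> 0\<close> assms(1) by (simp add: m_def degree_mult_eq degree_monom_eq)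
  then have "rem_top_coeff P (a * monom 1 m) = lead_coeff (a * monom 1 m)"
    using assms(1) by (simp add: rem_top_coeff_def mod_poly_less)
  also have "\<dots> = lead_coeff a" by (simp add: lead_coeff_mult degree_monom_eq)
  finally show False using assms(2)[of m] \<open>a \<noteq> 0\<close> assms(1) by (simp add: m_def)
qed

lemma rem_top_coeff_two_roots:
  fixes f :: "'a::field poly"
  shows "(b - a) * rem_top_coeff ([:a, 1:] * [:b, 1:]) f = poly f (- a) - poly f (- b)"
proof -
  define P where "P = [:a, 1:] * [:b, 1:]"
  have "P \<noteq> 0" and deg: "degree P = 2" by (simp_all add: P_def degree_mult_eq)
  define g where "g = f mod P"
  have "degree g \<le> 1" using degree_mod_less[OF \<open>P \<noteq> 0\<close>, of f] deg by (auto simp: g_def)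
  then have g: "g = [:coeff g 0, coeff g 1:]"
    by (intro poly_eqI) (auto simp: coeff_pCons coeff_eq_0 split: nat.split)
  have "poly f x = poly g x" if "poly P x = 0" for x
    using that by (metis g_def div_mult_mod_eq poly_add poly_mult mult_zero_right add_0)
  then have "poly f (- a) - poly f (- b) = poly g (- a) - poly g (- b)" by (simp add: P_def)
  also have "\<dots> = (b - a) * coeff g 1" by (subst (1 2) g) (simp add: algebra_simps)
  finally show ?thesis by (simp add: rem_top_coeff_def deg g_def P_def)
qed

lemma coeff_linear_power_binomial: "coeff ([:a, 1::'a::comm_semiring_1:] ^ n) j = of_nat (n choose j) * a ^ (n - j)"
  by (cases "j \<le> n") (simp_all add: coeff_linear_poly_power coeff_eq_0 degree_linear_power binomial_eq_0)

lemma rem_top_coeff_double_root_monom: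
  fixes a :: "'a::field"
  shows "rem_top_coeff ([:a, 1:] ^ 2) (monom 1 j) = of_nat j * (- a) ^ (j - 1)"
proof -
  have "pcompose (monom 1 j) [:- a, 1:] = [:- a, 1:] ^ j" by (rule monom_pcompose_linear)
  then show ?thesis by (simp add: rem_top_coeff_linear_power coeff_linear_power_binomial)
qed

lemma rem_top_coeff_linear_power_monom_mult:
  fixes c :: "'a::field"
  assumes "b < N"
  shows "rem_top_coeff ([:c, 1:] ^ N) (monom 1 a * [:c, 1:] ^ b)
       = of_nat (a choose (N - 1 - b)) * (- c) ^ (a - (N - 1 - b))"
proof -
  have "pcompose (monom 1 a * [:c, 1:] ^ b) [:- c, 1:] = monom 1 b * [:- c, 1:] ^ a"
    by (simp add: pcompose_mult monom_pcompose_linear pcompose_power pcompose_linear_linear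
        monom_altdef mult.commute)
  then show ?thesis
    using assms by (simp add: rem_top_coeff_linear_power coeff_monom_mult coeff_linear_power_binomial)
qed

(* The residue at -c of the derivative of X^m (X + c)^(s + 1 - N) vanishes. *)
lemma rem_top_coeff_linear_power_by_parts:
  fixes c :: "'a::field"
  assumes "s + 1 < N"
  shows "of_nat m * rem_top_coeff ([:c, 1:] ^ N) (monom 1 (m - 1) * [:c, 1:] ^ (s + 1))
       = of_nat (N - s - 1) * rem_top_coeff ([:c, 1:] ^ N) (monom 1 m * [:c, 1:] ^ s)"
proof -
  define K where "K = N - s - 1"
  have "K > 0" using assms by (simp add: K_def)
  have "N - 1 - (s + 1) = K - 1" "N - 1 - s = K" "m - 1 - (K - 1) = m - K"
    using assms \<open>K > 0\<close> by (auto simp: K_def)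
  then have "rem_top_coeff ([:c, 1:] ^ N) (monom 1 (m - 1) * [:c, 1:] ^ (s + 1))
        = of_nat ((m - 1) choose (K - 1)) * (- c) ^ (m - K)"
      "rem_top_coeff ([:c, 1:] ^ N) (monom 1 m * [:c, 1:] ^ s) = of_nat (m choose K) * (- c) ^ (m - K)"
    using rem_top_coeff_linear_power_monom_mult[of "s + 1" N c "m - 1"]
      rem_top_coeff_linear_power_monom_mult[of s N c m] assms by simp_all
  moreover have "of_nat m * of_nat ((m - 1) choose (K - 1)) = (of_nat K * of_nat (m choose K) :: 'a)"
    using \<open>K > 0\<close> by (metis of_nat_mult times_binomial_minus1_eq)
  ultimately show ?thesis unfolding K_def[symmetric] by (metis mult.assoc)
qed

section \<open>Complete homogeneous sums and their generating series\<close>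

definition complete_sym :: "'a::comm_semiring_1 \<Rightarrow> 'a \<Rightarrow> nat \<Rightarrow> 'a" where
  "complete_sym u v n = (\<Sum>i\<le>n. u ^ i * v ^ (n - i))"

lemma complete_sym_diff: "(u - v) * complete_sym u v n = u ^ Suc n - v ^ Suc n"
  for u v :: "'a::comm_ring_1"
  unfolding complete_sym_def lessThan_Suc_atMost[symmetric] by (rule diff_power_eq_sum[symmetric])

lemma complete_sym_same: "complete_sym u u n = of_nat (Suc n) * u ^ n"
  by (simp add: complete_sym_def power_add[symmetric])

lemma poly_complete_sym: "poly (complete_sym p q n) x = complete_sym (poly p x) (poly q x) n"
  by (simp add: complete_sym_def poly_sum)

lemma degree_complete_sym_linear: "degree (complete_sym [:a, 1:] [:b, 1::'a::idom:] n) \<le> n"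
  unfolding complete_sym_def
  by (intro degree_sum_le) (auto simp: degree_mult_eq degree_linear_power)

lemma fps_geometric: "Abs_fps (\<lambda>n. u ^ n) * (1 - fps_const (u::'a::comm_ring_1) * fps_X) = 1"
proof (rule fps_ext)
  fix n
  have "Abs_fps (\<lambda>n. u ^ n) * (1 - fps_const u * fps_X)
      = Abs_fps (\<lambda>n. u ^ n) - fps_X * (fps_const u * Abs_fps (\<lambda>n. u ^ n))"
    by (simp add: algebra_simps)
  then show "(Abs_fps (\<lambda>n. u ^ n) * (1 - fps_const u * fps_X)) $ n = 1 $ n"
    by (cases n) simp_all
qed

lemma fps_complete_sym:
  fixes u v :: "'a::comm_ring_1"
  shows "Abs_fps (complete_sym u v) * ((1 - fps_const u * fps_X) * (1 - fps_const v * fps_X)) = 1"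
proof -
  have "Abs_fps (complete_sym u v) = Abs_fps (\<lambda>n. u ^ n) * Abs_fps (\<lambda>n. v ^ n)"
    by (rule fps_ext) (simp add: complete_sym_def fps_mult_nth atLeast0AtMost)
  then have "Abs_fps (complete_sym u v) * ((1 - fps_const u * fps_X) * (1 - fps_const v * fps_X))
      = (Abs_fps (\<lambda>n. u ^ n) * (1 - fps_const u * fps_X)) * (Abs_fps (\<lambda>n. v ^ n) * (1 - fps_const v * fps_X))"
    by (simp only: mult_ac)
  then show ?thesis by (simp only: fps_geometric mult_1)
qed

lemma fps_complete_sym_series:
  fixes u v w :: "'a::field"
  defines "D \<equiv> (1 - fps_const u * fps_X) * (1 - fps_const v * fps_X)"
  shows "Abs_fps (\<lambda>n. w * complete_sym u v n) = fps_const w / D"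
    and "Abs_fps (\<lambda>n. if n = 0 then 0 else u ^ n - w * complete_sym u v (n - 1))
         = (1 - fps_const (v + w) * fps_X) / D - 1"
proof -
  let ?G = "Abs_fps (complete_sym u v)"
  have "D \<noteq> 0" by (metis D_def fps_complete_sym mult_zero_right zero_neq_one)
  have GD: "?G * D = 1" unfolding D_def by (rule fps_complete_sym)
  have "Abs_fps (\<lambda>n. w * complete_sym u v n) = fps_const w * ?G"
    by (rule fps_ext) simp
  also have "\<dots> = fps_const w * ?G * D / D" using \<open>D \<noteq> 0\<close> by (simp add: fps_divide_times_eq)
  finally show "Abs_fps (\<lambda>n. w * complete_sym u v n) = fps_const w / D" by (simp add: GD mult.assoc)
  let ?S = "Abs_fps (\<lambda>n. if n = 0 then 0 else u ^ n - w * complete_sym u v (n - 1))"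
  have S: "?S + 1 = Abs_fps (\<lambda>n. u ^ n) - fps_X * fps_const w * ?G"
    by (rule fps_ext) (simp add: mult.assoc)
  have "(?S + 1) * D = Abs_fps (\<lambda>n. u ^ n) * (1 - fps_const u * fps_X) * (1 - fps_const v * fps_X)
      - fps_X * fps_const w * (?G * D)"
    by (simp only: S D_def left_diff_distrib mult.assoc)
  also have "\<dots> = 1 - fps_const (v + w) * fps_X"
    by (simp only: fps_geometric GD mult_1 mult_1_right) (simp add: algebra_simps)
  finally have "?S + 1 = (1 - fps_const (v + w) * fps_X) / D"
    using \<open>D \<noteq> 0\<close> by (metis fps_divide_times_eq)
  then show "?S = (1 - fps_const (v + w) * fps_X) / D - 1" by (simp add: eq_diff_eq)
qed

lemma quadratic_factorization:
  fixes a b q u v x :: "'a::comm_ring_1"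
  assumes "a - b = - (u + v)" and "q - a * b = u * v"
  shows "(1 + a * x) * (1 - b * x) + q * x ^ 2 = (1 - u * x) * (1 - v * x)"
proof -
  have "(1 + a * x) * (1 - b * x) + q * x ^ 2 = 1 + (a - b) * x + (q - a * b) * x ^ 2"
    by (simp add: algebra_simps power2_eq_square)
  then show ?thesis unfolding assms by (simp add: algebra_simps power2_eq_square)
qed

section \<open>The relation polynomials\<close>

lemma lead_coeff_rel_poly: "lead_coeff (rel_poly n m l1 l2) = 1"
  by (simp add: rel_poly_def lead_coeff_prod lead_coeff_power)

lemma rel_poly_nonzero: "rel_poly n m l1 l2 \<noteq> 0"
  using lead_coeff_rel_poly[of n m l1 l2] by auto

lemma degree_rel_poly: "degree (rel_poly n m l1 l2) = m * (n + 1)"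
proof -
  have "degree (rel_poly n m l1 l2) = (\<Sum>j\<in>{0..n}. degree ([:wt n l1 l2 j, 1:] ^ m))"
    unfolding rel_poly_def by (rule degree_prod_eq_sum_degree) auto
  then show ?thesis by (simp add: degree_linear_power)
qed

lemma eq_integral_eq_rem_top_coeff: "eq_integral n m l1 l2 f = rem_top_coeff (rel_poly n m l1 l2) f"
  by (simp add: eq_integral_def rem_top_coeff_def degree_rel_poly proj_dim_def)

lemma rel_poly_1_1: "rel_poly 1 1 l1 l2 = [:l1, 1:] * [:l2, 1:]"
proof -
  have "{0..1::nat} = {0, 1}" by auto
  then show ?thesis by (simp add: rel_poly_def wt_def)
qed

lemma rel_poly_diagonal: "rel_poly d m l l = [:real d * l, 1:] ^ (m * (d + 1))"
proof -
  have "wt d l l j = real d * l" if "j \<le> d" for j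
    using that by (simp add: wt_def of_nat_diff algebra_simps)
  then have "rel_poly d m l l = (\<Prod>j\<in>{0..d}. [:real d * l, 1:] ^ m)"
    unfolding rel_poly_def by (intro prod.cong) auto
  also have "\<dots> = ([:real d * l, 1:] ^ m) ^ (d + 1)" by simp
  finally show ?thesis by (simp only: power_mult)
qed

(* Split off the coordinate y^d, resp. x^d, of W_d; the others are x, resp. y, times those of W_{d-1}. *)
lemma rel_poly_split_last:
  assumes "d \<ge> 1"
  shows "rel_poly d m l1 l2 = pcompose (rel_poly (d - 1) m l1 l2) [:l1, 1:] * [:real d * l2, 1:] ^ m"
proof -
  have "wt (d - 1) l1 l2 j + l1 = wt d l1 l2 j" if "j \<le> d - 1" for j
    using that assms by (simp add: wt_def of_nat_diff algebra_simps)
  then have "pcompose (rel_poly (d - 1) m l1 l2) [:l1, 1:] = (\<Prod>j\<in>{0..d - 1}. [:wt d l1 l2 j, 1:] ^ m)"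
    unfolding rel_poly_def by (auto simp: pcompose_prod pcompose_power pcompose_linear_linear intro: prod.cong)
  moreover have "{0..d} = insert d {0..d - 1}" "wt d l1 l2 d = real d * l2"
    using assms by (auto simp: wt_def)
  ultimately show ?thesis using assms unfolding rel_poly_def by (simp add: mult.commute)
qed

lemma rel_poly_split_first:
  assumes "d \<ge> 1"
  shows "rel_poly d m l1 l2 = pcompose (rel_poly (d - 1) m l1 l2) [:l2, 1:] * [:real d * l1, 1:] ^ m"
proof -
  have "wt (d - 1) l1 l2 j + l2 = wt d l1 l2 (Suc j)" if "j \<le> d - 1" for j
    using that assms by (simp add: wt_def of_nat_diff algebra_simps)
  then have "pcompose (rel_poly (d - 1) m l1 l2) [:l2, 1:] = (\<Prod>j\<in>{0..d - 1}. [:wt d l1 l2 (Suc j), 1:] ^ m)"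
    unfolding rel_poly_def by (auto simp: pcompose_prod pcompose_power pcompose_linear_linear intro: prod.cong)
  also have "\<dots> = (\<Prod>j\<in>{1..d}. [:wt d l1 l2 j, 1:] ^ m)"
    using assms prod.shift_bounds_cl_Suc_ivl[of "\<lambda>j. [:wt d l1 l2 j, 1:] ^ m" 0 "d - 1"] by simp
  moreover have "{0..d} = insert 0 {1..d}" "wt d l1 l2 0 = real d * l1"
    using assms by (auto simp: wt_def)
  ultimately show ?thesis unfolding rel_poly_def by (simp add: mult.commute)
qed

lemma rem_top_coeff_rel_poly_pred_shift_l1:
  assumes "d \<ge> 1"
  shows "rem_top_coeff (rel_poly (d - 1) m l1 l2) ([:- l1, 1:] ^ n)
       = rem_top_coeff (rel_poly d m l1 l2) (monom 1 n * [:real d * l2, 1:] ^ m)"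
  by (simp add: rem_top_coeff_shifted_monom rel_poly_nonzero rel_poly_split_last[OF assms]
      rem_top_coeff_mult_monic pcompose_eq_0_iff lead_coeff_power)

lemma rem_top_coeff_rel_poly_pred_shift_l2:
  assumes "d \<ge> 1"
  shows "rem_top_coeff (rel_poly (d - 1) m l1 l2) ([:- l2, 1:] ^ n)
       = rem_top_coeff (rel_poly d m l1 l2) (monom 1 n * [:real d * l1, 1:] ^ m)"
  by (simp add: rem_top_coeff_shifted_monom rel_poly_nonzero rel_poly_split_first[OF assms]
      rem_top_coeff_mult_monic pcompose_eq_0_iff lead_coeff_power)

section \<open>The pushforward of the powers of h1\<close>

lemma src_integral_eq:
  "src_integral r d k m l1 l2 = (\<Sum>i\<le>m. real (m choose i)
       * rem_top_coeff ([:l1, 1:] * [:l2, 1:]) (monom 1 (k + i))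
       * rem_top_coeff (rel_poly (d - 1) (r + 1) l1 l2) (monom 1 (m - i)))"
  unfolding src_integral_def eq_integral_eq_rem_top_coeff rel_poly_1_1 ..

lemma src_integral_distinct:
  "(l2 - l1) * src_integral r d k m l1 l2
     = (- l1) ^ k * rem_top_coeff (rel_poly (d - 1) (r + 1) l1 l2) ([:- l1, 1:] ^ m)
       - (- l2) ^ k * rem_top_coeff (rel_poly (d - 1) (r + 1) l1 l2) ([:- l2, 1:] ^ m)"
proof -
  let ?c = "\<lambda>j. rem_top_coeff (rel_poly (d - 1) (r + 1) l1 l2) (monom 1 j)"
  have P1: "(l2 - l1) * rem_top_coeff ([:l1, 1:] * [:l2, 1:]) (monom 1 j) = (- l1) ^ j - (- l2) ^ j" for j
    using rem_top_coeff_two_roots[of l2 l1 "monom 1 j"] by (simp add: poly_monom)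
  have "(l2 - l1) * src_integral r d k m l1 l2
     = (\<Sum>i\<le>m. real (m choose i) * ((l2 - l1) * rem_top_coeff ([:l1, 1:] * [:l2, 1:]) (monom 1 (k + i))) * ?c (m - i))"
    unfolding src_integral_eq sum_distrib_left by (rule sum.cong) (auto simp: ac_simps)
  also have "\<dots> = (\<Sum>i\<le>m. (- l1) ^ k * (real (m choose i) * (- l1) ^ i * ?c (m - i))
                   - (- l2) ^ k * (real (m choose i) * (- l2) ^ i * ?c (m - i)))"
    unfolding P1 by (rule sum.cong) (auto simp: power_add algebra_simps)
  finally show ?thesis
    by (simp add: rem_top_coeff_linear_power_expand sum_subtractf sum_distrib_left)
qed

lemma binomial_sum_derivative:
  fixes a :: "'a::comm_semiring_1"
  shows "(\<Sum>i\<le>m. of_nat (m choose i) * (of_nat i * a ^ (i - 1)) * c (m - i))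
       = of_nat m * (\<Sum>i\<le>m - 1. of_nat ((m - 1) choose i) * a ^ i * c (m - 1 - i))"
proof (cases m)
  case (Suc n)
  have "of_nat (Suc n choose Suc i) * (of_nat (Suc i) * a ^ i) * c (n - i)
      = of_nat (Suc n) * (of_nat (n choose i) * a ^ i * c (n - i))" for i
  proof -
    have "of_nat (Suc n choose Suc i) * of_nat (Suc i) = (of_nat (Suc n) * of_nat (n choose i) :: 'a)"
      by (metis Suc_times_binomial of_nat_mult mult.commute)
    then show ?thesis by (metis mult.assoc)
  qed
  then have "(\<Sum>i\<le>n. of_nat (Suc n choose Suc i) * (of_nat (Suc i) * a ^ i) * c (n - i))
      = of_nat (Suc n) * (\<Sum>i\<le>n. of_nat (n choose i) * a ^ i * c (n - i))"
    by (simp only: sum_distrib_left)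
  then show ?thesis
    unfolding Suc by (subst sum.atMost_Suc_shift) simp
qed simp

lemma src_integral_diagonal:
  "src_integral r d k m l l
     = real k * (- l) ^ (k - 1) * rem_top_coeff (rel_poly (d - 1) (r + 1) l l) ([:- l, 1:] ^ m)
       + (- l) ^ k * real m * rem_top_coeff (rel_poly (d - 1) (r + 1) l l) ([:- l, 1:] ^ (m - 1))"
proof -
  let ?c = "\<lambda>j. rem_top_coeff (rel_poly (d - 1) (r + 1) l l) (monom 1 j)"
  have split: "real (k + i) * (- l) ^ (k + i - 1)
      = real k * (- l) ^ (k - 1) * (- l) ^ i + (- l) ^ k * (real i * (- l) ^ (i - 1))" for i
    by (cases k; cases i) (simp_all add: algebra_simps power_add)
  have "src_integral r d k m l l = (\<Sum>i\<le>m. real (m choose i) * (real (k + i) * (- l) ^ (k + i - 1)) * ?c (m - i))"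
    unfolding src_integral_eq power2_eq_square[symmetric] rem_top_coeff_double_root_monom ..
  also have "\<dots> = real k * (- l) ^ (k - 1) * (\<Sum>i\<le>m. real (m choose i) * (- l) ^ i * ?c (m - i))
      + (- l) ^ k * (\<Sum>i\<le>m. real (m choose i) * (real i * (- l) ^ (i - 1)) * ?c (m - i))"
    unfolding split by (simp add: sum_distrib_left sum.distrib algebra_simps)
  also have "\<dots> = real k * (- l) ^ (k - 1) * rem_top_coeff (rel_poly (d - 1) (r + 1) l l) ([:- l, 1:] ^ m)
      + (- l) ^ k * (real m * rem_top_coeff (rel_poly (d - 1) (r + 1) l l) ([:- l, 1:] ^ (m - 1)))"
    by (simp only: binomial_sum_derivative[of m "- l" ?c] rem_top_coeff_linear_power_expand)
  finally show ?thesis by (simp only: mult.assoc)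
qed

(* Any k >= 1 gives the k = 1 polynomial; only k <= 1 is ever used. *)
definition alpha_poly :: "nat \<Rightarrow> real \<Rightarrow> real \<Rightarrow> nat \<Rightarrow> nat \<Rightarrow> real poly" where
  "alpha_poly d l1 l2 k r =
     (if k = 0 then smult (real d) (complete_sym [:real d * l2, 1:] [:real d * l1, 1:] r)
      else [:real d * l2, 1:] ^ (r + 1)
        - smult (real d * l2) (complete_sym [:real d * l2, 1:] [:real d * l1, 1:] r))"

lemma degree_alpha_poly: "degree (alpha_poly d l1 l2 k r) \<le> r + 1"
proof -
  let ?S = "complete_sym [:real d * l2, 1:] [:real d * l1, 1:] r"
  have S: "degree (smult c ?S) \<le> r + 1" for c
    using degree_smult_le[of c ?S] degree_complete_sym_linear[of "real d * l2" "real d * l1" r]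
    by linarith
  have "degree ([:real d * l2, 1:] ^ (r + 1) - smult (real d * l2) ?S) \<le> r + 1"
    by (rule degree_diff_le) (simp_all only: degree_linear_power S order_refl)
  with S[of "real d"] show ?thesis
    by (cases "k = 0") (simp_all only: alpha_poly_def if_True if_False simp_thms)
qed

lemma alpha_poly_divided_difference:
  assumes "k \<le> 1"
  shows "smult (l2 - l1) (alpha_poly d l1 l2 k r)
       = smult ((- l1) ^ k) ([:real d * l2, 1:] ^ (r + 1)) - smult ((- l2) ^ k) ([:real d * l1, 1:] ^ (r + 1))"
proof -
  let ?U = "[:real d * l2, 1:]" and ?V = "[:real d * l1, 1:]"
  let ?S = "complete_sym ?U ?V r"
  have "?U - ?V = [:real d * (l2 - l1):]" by (simp add: algebra_simps)
  then have S: "smult (real d * (l2 - l1)) ?S = ?U ^ (r + 1) - ?V ^ (r + 1)"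
    using complete_sym_diff[of ?U ?V r] by simp
  show ?thesis
  proof (cases k)
    case 0
    then have "smult (l2 - l1) (alpha_poly d l1 l2 k r) = smult (real d * (l2 - l1)) ?S"
      by (simp add: alpha_poly_def mult.commute)
    with 0 S show ?thesis by simp
  next
    case (Suc k')
    then have "k = 1" using assms by simp
    then have "smult (l2 - l1) (alpha_poly d l1 l2 k r)
        = smult (l2 - l1) (?U ^ (r + 1)) - smult l2 (smult (real d * (l2 - l1)) ?S)"
      by (simp add: alpha_poly_def smult_diff_right mult.commute mult.left_commute)
    also have "\<dots> = smult (- l1) (?U ^ (r + 1)) - smult (- l2) (?V ^ (r + 1))"
      unfolding S by (simp add: smult_diff_right smult_diff_left)
    finally show ?thesis using \<open>k = 1\<close> by simp
  qed
qed

lemma alpha_poly_diagonal: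
  assumes "k \<le> 1"
  shows "alpha_poly d l l k r = smult (real k * (- l) ^ (k - 1)) ([:real d * l, 1:] ^ (r + 1))
       + smult ((- l) ^ k * real d * real (r + 1)) ([:real d * l, 1:] ^ r)"
proof -
  have S: "complete_sym [:real d * l, 1:] [:real d * l, 1:] r = smult (real (r + 1)) ([:real d * l, 1:] ^ r)"
    by (simp only: complete_sym_same of_nat_mult_conv_smult Suc_eq_plus1)
  show ?thesis
  proof (cases k)
    case 0
    then show ?thesis by (simp add: alpha_poly_def S)
  next
    case (Suc k')
    then have "k = 1" using assms by simp
    then show ?thesis by (simp add: alpha_poly_def S) (simp add: mult_ac)
  qed
qed

lemma eq_integral_alpha_poly_distinct:
  assumes "d \<ge> 1" and "k \<le> 1" and "l1 \<noteq> l2"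
  shows "eq_integral d (r + 1) l1 l2 (alpha_poly d l1 l2 k r * monom 1 m) = src_integral r d k m l1 l2"
proof -
  let ?I = "\<lambda>g. rem_top_coeff (rel_poly d (r + 1) l1 l2) (monom 1 m * g)"
  have "(l2 - l1) * eq_integral d (r + 1) l1 l2 (alpha_poly d l1 l2 k r * monom 1 m)
      = ?I (smult (l2 - l1) (alpha_poly d l1 l2 k r))"
    by (simp only: eq_integral_eq_rem_top_coeff mult_smult_right rem_top_coeff_smult mult.commute)
  also have "\<dots> = (- l1) ^ k * ?I ([:real d * l2, 1:] ^ (r + 1)) - (- l2) ^ k * ?I ([:real d * l1, 1:] ^ (r + 1))"
    by (simp only: alpha_poly_divided_difference[OF assms(2)] right_diff_distrib mult_smult_right
        rem_top_coeff_diff rem_top_coeff_smult)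
  also have "\<dots> = (l2 - l1) * src_integral r d k m l1 l2"
    by (simp only: src_integral_distinct rem_top_coeff_rel_poly_pred_shift_l1[OF assms(1)]
        rem_top_coeff_rel_poly_pred_shift_l2[OF assms(1)])
  finally show ?thesis using assms(3) by simp
qed

lemma eq_integral_alpha_poly_diagonal:
  assumes "d \<ge> 1" and "k \<le> 1"
  shows "eq_integral d (r + 1) l l (alpha_poly d l l k r * monom 1 m) = src_integral r d k m l l"
proof -
  let ?U = "[:real d * l, 1:]"
  let ?I = "rem_top_coeff (rel_poly d (r + 1) l l)"
  let ?T = "\<lambda>j. rem_top_coeff (rel_poly (d - 1) (r + 1) l l) ([:- l, 1:] ^ j)"
  have T: "?T j = ?I (monom 1 j * ?U ^ (r + 1))" for j
    by (rule rem_top_coeff_rel_poly_pred_shift_l1[OF assms(1)])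
  have N: "(r + 1) * (d + 1) - r - 1 = d * (r + 1)" and "r + 1 < (r + 1) * (d + 1)"
    using assms(1) by (simp_all add: algebra_simps)
  then have parts: "real m * ?I (monom 1 (m - 1) * ?U ^ (r + 1)) = real d * real (r + 1) * ?I (monom 1 m * ?U ^ r)"
    using rem_top_coeff_linear_power_by_parts[of r "(r + 1) * (d + 1)" m "real d * l"]
    unfolding rel_poly_diagonal N of_nat_mult by blast
  have "eq_integral d (r + 1) l l (alpha_poly d l l k r * monom 1 m)
      = real k * (- l) ^ (k - 1) * ?I (monom 1 m * ?U ^ (r + 1))
        + (- l) ^ k * (real d * real (r + 1) * ?I (monom 1 m * ?U ^ r))"
    by (simp only: eq_integral_eq_rem_top_coeff alpha_poly_diagonal[OF assms(2)] mult.commute[of _ "monom 1 m"]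
        distrib_left mult_smult_right rem_top_coeff_add rem_top_coeff_smult mult.assoc)
  also have "\<dots> = real k * (- l) ^ (k - 1) * ?T m + (- l) ^ k * (real m * ?T (m - 1))"
    by (simp only: T parts[symmetric])
  also have "\<dots> = src_integral r d k m l l"
    by (simp only: src_integral_diagonal mult.assoc)
  finally show ?thesis .
qed

lemma eq_integral_alpha_poly:
  assumes "d \<ge> 1" and "k \<le> 1"
  shows "eq_integral d (r + 1) l1 l2 (alpha_poly d l1 l2 k r * monom 1 m) = src_integral r d k m l1 l2"
  using assms eq_integral_alpha_poly_distinct eq_integral_alpha_poly_diagonal by (cases "l1 = l2") auto

lemma alphaH_eq_alpha_poly:
  assumes "d \<ge> 1" and "k \<le> 1"
  shows "alphaH r d k l1 l2 = alpha_poly d l1 l2 k r"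
proof -
  let ?n = "proj_dim d (r + 1)" and ?P = "rel_poly d (r + 1) l1 l2" and ?A = "alpha_poly d l1 l2 k r"
  have dim: "r + 1 \<le> ?n" and deg: "degree ?P = ?n + 1"
    using assms(1) by (simp_all add: proj_dim_def degree_rel_poly algebra_simps)
  have "degree ?A \<le> ?n" using degree_alpha_poly dim by (rule order_trans)
  show ?thesis unfolding alphaH_def
  proof (rule the_equality)
    show "degree ?A \<le> ?n \<and>
        (\<forall>m\<le>?n. eq_integral d (r + 1) l1 l2 (?A * monom 1 m) = src_integral r d k m l1 l2)"
      using \<open>degree ?A \<le> ?n\<close> eq_integral_alpha_poly[OF assms] by blast
  next
    fix a
    assume a: "degree a \<le> ?n \<and>
        (\<forall>m\<le>?n. eq_integral d (r + 1) l1 l2 (a * monom 1 m) = src_integral r d k m l1 l2)"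
    have "a - ?A = 0"
    proof (rule rem_top_coeff_eq_0_imp_eq_0)
      show "degree (a - ?A) < degree ?P"
        using a \<open>degree ?A \<le> ?n\<close> deg degree_diff_le[of a ?n ?A] by simp
    next
      fix m
      assume "m < degree ?P"
      then show "rem_top_coeff ?P ((a - ?A) * monom 1 m) = 0"
        using a eq_integral_alpha_poly[OF assms, where m = m] deg
        by (simp add: left_diff_distrib rem_top_coeff_diff eq_integral_eq_rem_top_coeff)
    qed
    then show "a = ?A" by simp
  qed
qed

lemma alpha_eq_poly_alpha_poly:
  assumes "d \<ge> 1" and "k \<le> 1"
  shows "alpha r d k l1 l2 = poly (alpha_poly d l1 l2 k r) (real (d + 1) / 2 * - (l1 + l2))"
  unfolding alpha_def alphaH_eq_alpha_poly[OF assms] ..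

lemma poly_alpha_poly_0:
  "poly (alpha_poly d l1 l2 0 r) x = real d * complete_sym (real d * l2 + x) (real d * l1 + x) r"
  by (simp add: alpha_poly_def poly_complete_sym)

lemma poly_alpha_poly_1:
  "poly (alpha_poly d l1 l2 1 r) x
     = (real d * l2 + x) ^ Suc r - real d * l2 * complete_sym (real d * l2 + x) (real d * l1 + x) r"
  by (simp add: alpha_poly_def poly_complete_sym distrib_right)

lemma alpha_series:
  fixes d :: nat and l1 l2 :: real
  assumes "d \<ge> 1"
  defines "x \<equiv> real (d + 1) / 2 * - (l1 + l2)"
  defines "u \<equiv> real d * l2 + x" and "v \<equiv> real d * l1 + x"
  shows "Abs_fps (\<lambda>n. alpha n d 0 l1 l2)
           = fps_const (real d) / ((1 - fps_const u * fps_X) * (1 - fps_const v * fps_X))"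
    and "Abs_fps (\<lambda>n. if n = 0 then 0 else alpha (n - 1) d 1 l1 l2)
           = (1 - fps_const (v + real d * l2) * fps_X) / ((1 - fps_const u * fps_X) * (1 - fps_const v * fps_X)) - 1"
proof -
  have alpha: "alpha n d 0 l1 l2 = real d * complete_sym u v n"
    "alpha n d 1 l1 l2 = u ^ Suc n - real d * l2 * complete_sym u v n" for n
    using alpha_eq_poly_alpha_poly[OF assms(1), of 0 n l1 l2] alpha_eq_poly_alpha_poly[OF assms(1), of 1 n l1 l2]
    by (simp_all only: poly_alpha_poly_0 poly_alpha_poly_1 u_def v_def x_def order_refl le_numeral_extra)
  have "Abs_fps (\<lambda>n. alpha n d 0 l1 l2) = Abs_fps (\<lambda>n. real d * complete_sym u v n)"
    by (simp only: alpha)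
  then show "Abs_fps (\<lambda>n. alpha n d 0 l1 l2)
      = fps_const (real d) / ((1 - fps_const u * fps_X) * (1 - fps_const v * fps_X))"
    by (simp only: fps_complete_sym_series(1))
  have "(if n = 0 then 0 else alpha (n - 1) d 1 l1 l2)
      = (if n = 0 then 0 else u ^ n - real d * l2 * complete_sym u v (n - 1))" for n
    using alpha(2)[of "n - 1"] by (cases n) simp_all
  then show "Abs_fps (\<lambda>n. if n = 0 then 0 else alpha (n - 1) d 1 l1 l2)
      = (1 - fps_const (v + real d * l2) * fps_X) / ((1 - fps_const u * fps_X) * (1 - fps_const v * fps_X)) - 1"
    by (simp only: fps_complete_sym_series(2))
qed

theorem mainTheorem8:
  fixes d :: nat and l1 l2 :: real
  assumes "odd d"
  defines "c1 \<equiv> - (l1 + l2)" and "c2 \<equiv> l1 * l2"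
  defines "D \<equiv> (1 + fps_const (real (d - 1) / 2 * c1) * fps_X)
                 * (1 - fps_const (real (d + 1) / 2 * c1) * fps_X)
               + fps_const (real d ^ 2 * c2) * fps_X ^ 2"
  shows "Abs_fps (\<lambda>n. alpha n d 0 l1 l2) = fps_const (real d) / D
         \<and> Abs_fps (\<lambda>n. if n = 0 then 0 else alpha (n - 1) d 1 l1 l2)
           = (1 + fps_const (real (d - 1) / 2 * c1) * fps_X) / D - 1"
proof -
  have "d \<ge> 1" using \<open>odd d\<close> by (cases d) auto
  define x where "x = real (d + 1) / 2 * c1"
  define u where "u = real d * l2 + x"
  define v where "v = real d * l1 + x"
  have a: "real (d - 1) / 2 * c1 = - (v + real d * l2)"
    and q: "real d ^ 2 * c2 - real (d - 1) / 2 * c1 * x = u * v"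
    using \<open>d \<ge> 1\<close> by (simp_all add: v_def u_def x_def c1_def c2_def of_nat_diff field_simps power2_eq_square)
  have "real (d - 1) / 2 * c1 - x = - (u + v)" unfolding a u_def by simp
  with q have "D = (1 - fps_const u * fps_X) * (1 - fps_const v * fps_X)"
    unfolding D_def x_def[symmetric]
    by (intro quadratic_factorization) (simp_all only: fps_const_sub fps_const_add fps_const_neg fps_const_mult)
  moreover have "1 + fps_const (real (d - 1) / 2 * c1) * fps_X = 1 - fps_const (v + real d * l2) * fps_X"
    unfolding a by (simp flip: fps_const_neg)
  ultimately show ?thesis
    using alpha_series[OF \<open>d \<ge> 1\<close>, of l1 l2] unfolding u_def v_def x_def c1_def by (simp only:)
qed

end
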